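(* Let $\lambda_0<\lambda_1$ be real numbers, let $\lambda_2,\dots,\lambda_n\in\mathbb{C}$, and suppose that $E_{(\lambda_2,\dots,\lambda_n)}$ is an extended Chebyshev space over $[a,b]$ ($a<b$) that is closed under complex conjugation. Let $p_{n,0},\dots,p_{n,n}$ be a Bernstein basis of $E_{(\lambda_0,\dots,\lambda_n)}$ for $\{a,b\}$ consisting of real-valued functions that are non-negative on $[a,b]$. Then there exist unique points $t_0,\dots,t_n\in[a,b]$ and unique positive coefficients $\alpha_0,\dots,\alpha_n$ such that the operator $B_n:C[a,b]\to E_{(\lambda_0,\dots,\lambda_n)}$, $B_nf=\sum_{k=0}^nf(t_k)\alpha_kp_{n,k}$, satisfies $B_n(e^{\lambda_0x})=e^{\lambda_0x}$ and $B_n(e^{\lambda_1x})=e^{\lambda_1x}$.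
   Context: For complex numbers $\mu_0,\dots,\mu_m$, the space of exponential polynomials is $E_{(\mu_0,\dots,\mu_m)}=\{f\in C^\infty(\mathbb{R},\mathbb{C}):(\frac{d}{dx}-\mu_0)\cdots(\frac{d}{dx}-\mu_m)f=0\}$ (of dimension $m+1$), considered as functions on $[a,b]$. It is closed under complex conjugation if $\bar f$ belongs to it whenever $f$ does. An $(m+1)$-dimensional space $V\subset C^m([a,b],\mathbb{C})$ is an extended Chebyshev space over $[a,b]$ if every non-zero $f\in V$ has at most $m$ zeros in $[a,b]$ counting multiplicities. A function has a zero of order $k$ at $c$ if $f(c)=\dots=f^{(k-1)}(c)=0\neq f^{(k)}(c)$ (one-sided at endpoints); a Bernstein basis for $\{a,b\}$ of an $(m+1)$-dimensional space is a system $p_{m,0},\dots,p_{m,m}$ in it with $p_{m,k}$ having a zero of order exactly $k$ at $a$ and exactly $m-k$ at $b$. *)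

theory Defs
  imports "HOL-Analysis.Analysis"
begin

definition cderiv :: "(real \<Rightarrow> complex) \<Rightarrow> real \<Rightarrow> complex" where
  "cderiv f = (\<lambda>x. vector_derivative f (at x))"

definition smooth_fun :: "(real \<Rightarrow> complex) \<Rightarrow> bool" where
  "smooth_fun f \<longleftrightarrow> (\<forall>k x. ((cderiv ^^ k) f) differentiable (at x))"

definition diff_op :: "complex \<Rightarrow> (real \<Rightarrow> complex) \<Rightarrow> real \<Rightarrow> complex" where
  "diff_op \<mu> f = (\<lambda>x. cderiv f x - \<mu> * f x)"

text \<open>Space of exponential polynomials E_(mu_0,...,mu_m), the list being [mu_0,...,mu_m]:
  smooth f with (d/dx - mu_0) ... (d/dx - mu_m) f = 0.\<close>
definition exp_poly_space :: "complex list \<Rightarrow> (real \<Rightarrow> complex) set" where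
  "exp_poly_space mus =
     {f. smooth_fun f \<and> foldr diff_op mus f = (\<lambda>_. 0)}"

definition closed_under_cnj :: "(real \<Rightarrow> complex) set \<Rightarrow> bool" where
  "closed_under_cnj V \<longleftrightarrow> (\<forall>f\<in>V. (\<lambda>x. cnj (f x)) \<in> V)"

definition zero_at_least :: "(real \<Rightarrow> complex) \<Rightarrow> real \<Rightarrow> nat \<Rightarrow> bool" where
  "zero_at_least f c k \<longleftrightarrow> (\<forall>j<k. (cderiv ^^ j) f c = 0)"

definition zero_order_exactly :: "(real \<Rightarrow> complex) \<Rightarrow> real \<Rightarrow> nat \<Rightarrow> bool" where
  "zero_order_exactly f c k \<longleftrightarrow> zero_at_least f c k \<and> (cderiv ^^ k) f c \<noteq> 0"

text \<open>Extended Chebyshev space over [a,b] (for an (m+1)-dimensional space V):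
  every f in V that is non-zero on [a,b] has at most m zeros in [a,b],
  counting multiplicities.\<close>
definition ext_chebyshev :: "(real \<Rightarrow> complex) set \<Rightarrow> nat \<Rightarrow> real \<Rightarrow> real \<Rightarrow> bool" where
  "ext_chebyshev V m a b \<longleftrightarrow>
     (\<forall>f\<in>V. (\<exists>x\<in>{a..b}. f x \<noteq> 0) \<longrightarrow>
        (\<forall>S k. finite S \<and> S \<subseteq> {a..b} \<and> (\<forall>c\<in>S. zero_at_least f c (k c))
               \<longrightarrow> (\<Sum>c\<in>S. k c) \<le> m))"

definition bernstein_basis ::
    "(nat \<Rightarrow> real \<Rightarrow> complex) \<Rightarrow> nat \<Rightarrow> (real \<Rightarrow> complex) set \<Rightarrow> real \<Rightarrow> real \<Rightarrow> bool" where
  "bernstein_basis p m V a b \<longleftrightarrow>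
     (\<forall>k\<le>m. p k \<in> V \<and> zero_order_exactly (p k) a k \<and> zero_order_exactly (p k) b (m - k))"

definition bern_op ::
    "nat \<Rightarrow> (nat \<Rightarrow> real) \<Rightarrow> (nat \<Rightarrow> real) \<Rightarrow> (nat \<Rightarrow> real \<Rightarrow> complex)
       \<Rightarrow> (real \<Rightarrow> real) \<Rightarrow> real \<Rightarrow> complex" where
  "bern_op n t \<alpha> p f = (\<lambda>x. \<Sum>k\<le>n. of_real (f (t k) * \<alpha> k) * p k x)"

end

(*
  Write exp (l0 x) = \<Sum> c_k p_k and exp (l1 x) = \<Sum> d_k p_k with real c_k, d_k. By linear
  independence of the Bernstein basis, B_n reproduces both exponentials iff
  exp (l0 t_k) \<alpha>_k = c_k and exp (l1 t_k) \<alpha>_k = d_k for all k, which forces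
  t_k = ln (d_k / c_k) / (l1 - l0). So everything reduces to c_k > 0 and
  exp ((l1 - l0) a) \<le> d_k / c_k \<le> exp ((l1 - l0) b). Evaluating at a and b gives the ratios
  for k = 0 and k = n exactly, and the ratios increase strictly in k: applying d/dx - l0 to the
  tails \<Sum>_{j>i} c_j p_j yields a Bernstein-type system of E(l1, l2, ...), in which summation by
  parts writes (l1 - l0) exp (l1 x) with the increments d_{i+1}/c_{i+1} - d_i/c_i as coefficients.
  Positivity of the coefficients of a positive exponential in such a system (first the c_k, then
  the increments) comes from counting zeros: a non-positive coefficient would give a tail one zero
  too many, which the extended Chebyshev property of E(l2, ..., ln), lifted to E(l1, ..., ln) by
  Rolle's theorem, rules out.
*)

theory Submission
  imports Defs
begin

lemma funpow_cderiv_Suc_right: "(cderiv ^^ Suc j) f = (cderiv ^^ j) (cderiv f)"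
  by (simp add: funpow_Suc_right del: funpow.simps)

lemma funpow_cderiv_commute: "(cderiv ^^ j) (cderiv f) = cderiv ((cderiv ^^ j) f)"
  by (metis funpow_swap1)

lemma smooth_fun_cderiv: "smooth_fun f \<Longrightarrow> smooth_fun (cderiv f)"
  unfolding smooth_fun_def by (metis funpow_cderiv_Suc_right)

lemma smooth_fun_funpow_cderiv: "smooth_fun f \<Longrightarrow> smooth_fun ((cderiv ^^ j) f)"
  by (induction j) (auto intro: smooth_fun_cderiv)

lemma smooth_fun_differentiable: "smooth_fun f \<Longrightarrow> f differentiable (at x)"
  unfolding smooth_fun_def by (metis funpow_0)

lemma smooth_fun_has_vector_derivative:
  "smooth_fun f \<Longrightarrow> (f has_vector_derivative cderiv f x) (at x)"
  unfolding cderiv_def by (simp add: smooth_fun_differentiable vector_derivative_works[symmetric])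

lemma smooth_fun_continuous_on: "smooth_fun f \<Longrightarrow> continuous_on S f"
  by (metis continuous_at_imp_continuous_on has_vector_derivative_continuous
      smooth_fun_has_vector_derivative)

lemma cderiv_eqI: "(f has_vector_derivative D) (at x) \<Longrightarrow> cderiv f x = D"
  unfolding cderiv_def by (simp add: vector_derivative_at)

lemma has_vector_derivative_lincomb:
  assumes "finite K" "\<forall>k\<in>K. smooth_fun (f k)"
  shows "((\<lambda>x. \<Sum>k\<in>K. w k * f k x) has_vector_derivative (\<Sum>k\<in>K. w k * cderiv (f k) x)) (at x)"
  using assms
  by (intro has_vector_derivative_sum has_vector_derivative_mult_right)
     (auto intro: smooth_fun_has_vector_derivative)

lemma cderiv_lincomb:
  assumes "finite K" "\<forall>k\<in>K. smooth_fun (f k)"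
  shows "cderiv (\<lambda>x. \<Sum>k\<in>K. w k * f k x) = (\<lambda>x. \<Sum>k\<in>K. w k * cderiv (f k) x)"
  using has_vector_derivative_lincomb[OF assms] cderiv_eqI by blast

lemma funpow_cderiv_lincomb:
  assumes "finite K" "\<forall>k\<in>K. smooth_fun (f k)"
  shows "(cderiv ^^ j) (\<lambda>x. \<Sum>k\<in>K. w k * f k x) = (\<lambda>x. \<Sum>k\<in>K. w k * (cderiv ^^ j) (f k) x)"
proof (induction j)
  case (Suc j)
  have "\<forall>k\<in>K. smooth_fun ((cderiv ^^ j) (f k))"
    using assms(2) smooth_fun_funpow_cderiv by blast
  then show ?case using Suc by (simp add: cderiv_lincomb[OF assms(1)])
qed simp

lemma smooth_fun_lincomb:
  assumes "finite K" "\<forall>k\<in>K. smooth_fun (f k)"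
  shows "smooth_fun (\<lambda>x. \<Sum>k\<in>K. w k * f k x)"
  unfolding smooth_fun_def funpow_cderiv_lincomb[OF assms]
proof (intro allI)
  fix j x
  have "\<forall>k\<in>K. smooth_fun ((cderiv ^^ j) (f k))"
    using assms(2) smooth_fun_funpow_cderiv by blast
  from has_vector_derivative_lincomb[OF assms(1) this]
  show "(\<lambda>x. \<Sum>k\<in>K. w k * (cderiv ^^ j) (f k) x) differentiable at x"
    by (rule differentiableI_vector)
qed

lemma smooth_fun_diff_op: "smooth_fun f \<Longrightarrow> smooth_fun (diff_op \<mu> f)"
  using smooth_fun_lincomb[of "{0, 1::nat}" "\<lambda>k. if k = 0 then cderiv f else f"
      "\<lambda>k. if k = 0 then 1 else -\<mu>"]
  by (simp add: smooth_fun_cderiv diff_op_def)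

lemma funpow_cderiv_diff_op:
  assumes "smooth_fun f"
  shows "(cderiv ^^ j) (diff_op \<mu> f) = (\<lambda>x. (cderiv ^^ Suc j) f x - \<mu> * (cderiv ^^ j) f x)"
  using funpow_cderiv_lincomb[of "{0, 1::nat}" "\<lambda>k. if k = 0 then cderiv f else f" j
      "\<lambda>k. if k = 0 then 1 else -\<mu>"]
  by (simp add: assms smooth_fun_cderiv diff_op_def funpow_cderiv_commute)

lemma diff_op_commute:
  assumes "smooth_fun f"
  shows "diff_op \<mu> (diff_op \<nu> f) = diff_op \<nu> (diff_op \<mu> f)"
  using funpow_cderiv_diff_op[OF assms, of 1]
  by (auto simp: diff_op_def algebra_simps fun_eq_iff)

lemma diff_op_lincomb:
  assumes "finite K" "\<forall>k\<in>K. smooth_fun (f k)"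
  shows "diff_op \<mu> (\<lambda>x. \<Sum>k\<in>K. w k * f k x) = (\<lambda>x. \<Sum>k\<in>K. w k * diff_op \<mu> (f k) x)"
  unfolding diff_op_def cderiv_lincomb[OF assms]
  by (auto simp: fun_eq_iff sum_subtractf algebra_simps sum_distrib_left)

lemma smooth_fun_foldr_diff_op: "smooth_fun f \<Longrightarrow> smooth_fun (foldr diff_op mus f)"
  by (induction mus) (auto intro: smooth_fun_diff_op)

lemma foldr_diff_op_commute:
  "smooth_fun f \<Longrightarrow> foldr diff_op mus (diff_op \<mu> f) = diff_op \<mu> (foldr diff_op mus f)"
  by (induction mus) (auto simp: diff_op_commute smooth_fun_foldr_diff_op)

lemma foldr_diff_op_lincomb:
  assumes "finite K" "\<forall>k\<in>K. smooth_fun (f k)"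
  shows "foldr diff_op mus (\<lambda>x. \<Sum>k\<in>K. w k * f k x) =
    (\<lambda>x. \<Sum>k\<in>K. w k * foldr diff_op mus (f k) x)"
proof (induction mus)
  case (Cons \<nu> mus)
  have "\<forall>k\<in>K. smooth_fun (foldr diff_op mus (f k))"
    using assms(2) smooth_fun_foldr_diff_op by blast
  then show ?case using Cons by (simp add: diff_op_lincomb[OF assms(1)])
qed simp

lemma exp_poly_space_lincomb:
  assumes "finite K" "\<forall>k\<in>K. f k \<in> exp_poly_space mus"
  shows "(\<lambda>x. \<Sum>k\<in>K. w k * f k x) \<in> exp_poly_space mus"
proof -
  have "\<forall>k\<in>K. smooth_fun (f k)" using assms(2) by (auto simp: exp_poly_space_def)
  then show ?thesis using assms unfolding exp_poly_space_def
    by (auto simp: smooth_fun_lincomb foldr_diff_op_lincomb)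
qed

lemma diff_op_in_exp_poly_space:
  "f \<in> exp_poly_space (\<mu> # mus) \<Longrightarrow> diff_op \<mu> f \<in> exp_poly_space mus"
  unfolding exp_poly_space_def by (auto simp: foldr_diff_op_commute smooth_fun_diff_op)

definition exp_fun :: "complex \<Rightarrow> real \<Rightarrow> complex" where
  "exp_fun \<mu> x = exp (\<mu> * of_real x)"

lemma exp_fun_of_real: "exp_fun (of_real l) x = of_real (exp (l * x))"
  by (simp add: exp_fun_def exp_of_real[symmetric])

lemma has_vector_derivative_exp_fun:
  "((\<lambda>x. c * exp_fun \<mu> x) has_vector_derivative (c * (\<mu> * exp_fun \<mu> x))) (at x within S)"
proof -
  have "((\<lambda>z. exp (\<mu> * z)) has_field_derivative (exp (\<mu> * of_real x) * \<mu>)) (at (of_real x))"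
    by (auto intro!: derivative_eq_intros)
  from has_vector_derivative_real_field[OF this]
  have "((\<lambda>x. exp (\<mu> * of_real x)) has_vector_derivative (exp (\<mu> * of_real x) * \<mu>)) (at x within S)" .
  from has_vector_derivative_mult_right[OF this, of c] show ?thesis
    unfolding exp_fun_def by (simp add: mult.commute)
qed

lemma cderiv_exp_fun: "cderiv (\<lambda>x. c * exp_fun \<mu> x) = (\<lambda>x. (c * \<mu>) * exp_fun \<mu> x)"
  using has_vector_derivative_exp_fun[of c \<mu> _ UNIV] cderiv_eqI by (auto simp: fun_eq_iff ac_simps)

lemma funpow_cderiv_exp_fun:
  "(cderiv ^^ j) (\<lambda>x. c * exp_fun \<mu> x) = (\<lambda>x. (c * \<mu> ^ j) * exp_fun \<mu> x)"
proof (induction j arbitrary: c)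
  case (Suc j)
  show ?case unfolding funpow_cderiv_Suc_right cderiv_exp_fun Suc by (simp add: mult.assoc)
qed simp

lemma smooth_fun_exp_fun: "smooth_fun (\<lambda>x. c * exp_fun \<mu> x)"
  unfolding smooth_fun_def funpow_cderiv_exp_fun
  using has_vector_derivative_exp_fun differentiableI_vector by blast

lemma smooth_fun_zero: "smooth_fun (\<lambda>_. 0)"
  using smooth_fun_exp_fun[of 0] by simp

lemma diff_op_exp_fun:
  "diff_op \<nu> (\<lambda>x. c * exp_fun \<mu> x) = (\<lambda>x. (c * (\<mu> - \<nu>)) * exp_fun \<mu> x)"
  unfolding diff_op_def cderiv_exp_fun by (auto simp: algebra_simps)

lemma foldr_diff_op_exp_fun:
  "foldr diff_op mus (\<lambda>x. c * exp_fun \<mu> x) =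
    (\<lambda>x. (c * (\<Prod>\<nu>\<leftarrow>mus. \<mu> - \<nu>)) * exp_fun \<mu> x)"
proof (induction mus arbitrary: c)
  case (Cons \<nu> mus)
  show ?case
    by (simp only: foldr.simps o_apply Cons diff_op_exp_fun) (simp add: mult.assoc mult.left_commute)
qed simp

lemma exp_fun_in_exp_poly_space:
  assumes "\<mu> \<in> set mus"
  shows "(\<lambda>x. c * exp_fun \<mu> x) \<in> exp_poly_space mus"
proof -
  have "0 \<in> set (map (\<lambda>\<nu>. \<mu> - \<nu>) mus)" using assms by (auto simp: image_iff)
  then have "(\<Prod>\<nu>\<leftarrow>mus. \<mu> - \<nu>) = 0" by (simp only: prod_list_zero_iff)
  then show ?thesis by (simp add: exp_poly_space_def foldr_diff_op_exp_fun smooth_fun_exp_fun)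
qed

lemma diff_op_eq_0_imp_exp:
  assumes "smooth_fun f" "a \<le> b" "\<forall>x\<in>{a..b}. diff_op \<mu> f x = 0" "x \<in> {a..b}"
  shows "f x = exp (\<mu> * of_real (x - a)) * f a"
proof -
  define h where "h x = exp_fun (- \<mu>) x * f x" for x
  have "(h has_vector_derivative 0) (at x within {a..b})" if "x \<in> {a..b}" for x
  proof -
    have "(h has_vector_derivative
        exp_fun (- \<mu>) x * cderiv f x + (- \<mu> * exp_fun (- \<mu>) x) * f x) (at x within {a..b})"
      unfolding h_def
      using has_vector_derivative_mult[OF has_vector_derivative_exp_fun[of 1 "- \<mu>" x "{a..b}"]
          has_vector_derivative_at_within[OF smooth_fun_has_vector_derivative[OF assms(1)]]]
      by simp
    then show ?thesis
      using assms(3) that by (simp add: diff_op_def algebra_simps)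
  qed
  then obtain C where "\<And>x. x \<in> {a..b} \<Longrightarrow> h x = C"
    using has_vector_derivative_zero_constant[of "{a..b}" h] by blast
  then have "h x = h a" using assms(2,4) by auto
  then show ?thesis
    unfolding h_def exp_fun_def by (simp add: exp_minus field_simps exp_diff)
qed

lemma exp_poly_space_zero_jet_imp_zero:
  assumes "f \<in> exp_poly_space mus" "\<forall>j<length mus. (cderiv ^^ j) f a = 0"
  shows "f x = 0"
  using assms
proof (induction mus arbitrary: f x)
  case Nil
  then show ?case by (simp add: exp_poly_space_def)
next
  case (Cons \<mu> mus)
  have f: "smooth_fun f" using Cons.prems by (simp add: exp_poly_space_def)
  have "(cderiv ^^ j) (diff_op \<mu> f) a = 0" if "j < length mus" for j
    using Cons.prems(2) that by (auto simp: funpow_cderiv_diff_op[OF f] simp del: funpow.simps)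
  then have Df: "\<And>y. diff_op \<mu> f y = 0"
    using Cons.IH[OF diff_op_in_exp_poly_space[OF Cons.prems(1)]] by blast
  have fa: "f a = 0" using Cons.prems(2)[rule_format, of 0] by simp
  show ?case
  proof (cases "a \<le> x")
    case True
    then show ?thesis using diff_op_eq_0_imp_exp[OF f True, of \<mu> x] Df fa by simp
  next
    case False
    then have "x \<le> a" by simp
    then show ?thesis using diff_op_eq_0_imp_exp[OF f \<open>x \<le> a\<close>, of \<mu> a] Df fa by simp
  qed
qed

lemma lower_triangular_solvable:
  fixes A :: "nat \<Rightarrow> nat \<Rightarrow> 'a::field"
  assumes upper_zero: "\<forall>k\<le>n. \<forall>j<k. A j k = 0" and diag: "\<forall>k\<le>n. A k k \<noteq> 0"
  shows "\<exists>w. \<forall>j\<le>n. (\<Sum>k\<le>n. w k * A j k) = y j"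
proof -
  have "\<exists>w. (\<forall>k\<ge>m. w k = 0) \<and> (\<forall>j<m. (\<Sum>k\<le>n. w k * A j k) = y j)" if "m \<le> Suc n" for m
    using that
  proof (induction m)
    case 0
    show ?case by (intro exI[of _ "\<lambda>_. 0"]) simp
  next
    case (Suc m)
    then obtain w where w0: "\<forall>k\<ge>m. w k = 0" and wy: "\<forall>j<m. (\<Sum>k\<le>n. w k * A j k) = y j"
      by auto
    have m: "m \<le> n" using Suc.prems by simp
    define v where "v = (y m - (\<Sum>k\<le>n. w k * A m k)) / A m m"
    have add_v: "(\<Sum>k\<le>n. (w(m := v)) k * A j k) = (\<Sum>k\<le>n. w k * A j k) + v * A j m" for j
    proof -
      have "(\<Sum>k\<le>n. (w(m := v)) k * A j k) = (\<Sum>k\<le>n. w k * A j k + (if k = m then v * A j m else 0))"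
        by (rule sum.cong) (auto simp: w0)
      then show ?thesis using m by (simp add: sum.distrib)
    qed
    show ?case
    proof (intro exI[of _ "w(m := v)"] conjI allI impI)
      show "(w(m := v)) k = 0" if "Suc m \<le> k" for k using w0 that by auto
      show "(\<Sum>k\<le>n. (w(m := v)) k * A j k) = y j" if "j < Suc m" for j
      proof (cases "j < m")
        case True
        then show ?thesis using add_v wy upper_zero m by simp
      next
        case False
        with that have "j = m" by simp
        then show ?thesis using add_v diag m by (simp add: v_def)
      qed
    qed
  qed
  from this[of "Suc n"] show ?thesis by (auto simp: less_Suc_eq_le)
qed

lemma exp_poly_space_eq_lincomb:
  assumes f: "f \<in> exp_poly_space mus" and len: "length mus = Suc n"
    and p: "\<forall>k\<le>n. p k \<in> exp_poly_space mus \<and> zero_order_exactly (p k) a k"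
  shows "\<exists>w. \<forall>x. f x = (\<Sum>k\<le>n. w k * p k x)"
proof -
  have "\<exists>w. \<forall>j\<le>n. (\<Sum>k\<le>n. w k * (cderiv ^^ j) (p k) a) = (cderiv ^^ j) f a"
    by (rule lower_triangular_solvable) (use p in \<open>auto simp: zero_order_exactly_def zero_at_least_def\<close>)
  then obtain w where w: "\<forall>j\<le>n. (\<Sum>k\<le>n. w k * (cderiv ^^ j) (p k) a) = (cderiv ^^ j) f a"
    by blast
  define g where "g k = (if k \<le> n then p k else f)" for k
  define v where "v k = (if k \<le> n then - w k else 1)" for k
  have g: "\<forall>k\<in>{..Suc n}. g k \<in> exp_poly_space mus" using p f by (simp add: g_def)
  then have smooth: "\<forall>k\<in>{..Suc n}. smooth_fun (g k)" by (simp add: exp_poly_space_def)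
  have "(cderiv ^^ j) (\<lambda>x. \<Sum>k\<le>Suc n. v k * g k x) a = 0" if "j < length mus" for j
  proof -
    have "(cderiv ^^ j) (\<lambda>x. \<Sum>k\<le>Suc n. v k * g k x) a = (\<Sum>k\<le>Suc n. v k * (cderiv ^^ j) (g k) a)"
      by (simp only: funpow_cderiv_lincomb[OF finite_atMost smooth])
    also have "\<dots> = 0" using w that len by (simp add: g_def v_def sum_negf)
    finally show ?thesis .
  qed
  then have "(\<Sum>k\<le>Suc n. v k * g k x) = 0" for x
    using exp_poly_space_zero_jet_imp_zero[OF exp_poly_space_lincomb[OF _ g]] by blast
  then have "f x = (\<Sum>k\<le>n. w k * p k x)" for x
    by (simp add: g_def v_def sum_negf)
  then show ?thesis by blast
qed

lemma sum_eq_sum_Re_coeffs: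
  assumes "(\<Sum>k\<in>K. w k * q k) \<in> \<real>" "\<forall>k\<in>K. q k \<in> \<real>"
  shows "(\<Sum>k\<in>K. w k * q k) = (\<Sum>k\<in>K. of_real (Re (w k)) * q k)"
  using assms by (intro complex_eqI) (auto simp: Re_sum Im_sum complex_is_Real_iff)

lemma exp_eq_real_lincomb:
  fixes l :: real
  assumes "of_real l \<in> set mus" "length mus = Suc n"
    and "\<forall>k\<le>n. p k \<in> exp_poly_space mus \<and> zero_order_exactly (p k) a k"
    and real: "\<forall>k\<le>n. \<forall>x\<in>S. p k x \<in> \<real>"
  obtains c :: "nat \<Rightarrow> real" where "\<forall>x\<in>S. (\<Sum>k\<le>n. of_real (c k) * p k x) = of_real (exp (l * x))"
proof -
  have "(\<lambda>x. 1 * exp_fun (of_real l) x) \<in> exp_poly_space mus"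
    by (rule exp_fun_in_exp_poly_space[OF assms(1)])
  from exp_poly_space_eq_lincomb[OF this assms(2,3)]
  obtain w where w: "\<forall>x. exp_fun (of_real l) x = (\<Sum>k\<le>n. w k * p k x)"
    by auto
  have "(\<Sum>k\<le>n. of_real (Re (w k)) * p k x) = of_real (exp (l * x))" if "x \<in> S" for x
  proof -
    have "(\<Sum>k\<le>n. w k * p k x) = of_real (exp (l * x))"
      using w[rule_format, of x] by (simp add: exp_fun_of_real)
    moreover have "\<forall>k\<in>{..n}. p k x \<in> \<real>" using real that by simp
    ultimately show ?thesis using sum_eq_sum_Re_coeffs[of w "\<lambda>k. p k x" "{..n}"] by simp
  qed
  then show ?thesis using that[of "\<lambda>k. Re (w k)"] by blast
qed

lemma cderiv_eq_on_interval:
  assumes "a < b" "x \<in> {a..b}" "f differentiable (at x)" "g differentiable (at x)"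
    and "\<forall>y\<in>{a..b}. f y = g y"
  shows "cderiv f x = cderiv g x"
proof -
  have f': "(f has_vector_derivative cderiv f x) (at x within {a..b})"
    and g': "(g has_vector_derivative cderiv g x) (at x within {a..b})"
    using assms(3,4) unfolding cderiv_def
    by (metis has_vector_derivative_at_within vector_derivative_works)+
  have "(f has_vector_derivative cderiv g x) (at x within {a..b})"
    by (rule has_vector_derivative_transform[OF assms(2) _ g']) (use assms(5) in auto)
  with f' show ?thesis
    using vector_derivative_unique_within_closed_interval[of a b x f] assms(1,2)
    by (simp add: cbox_interval)
qed

lemma funpow_cderiv_eq_on_interval:
  assumes "a < b" "smooth_fun f" "smooth_fun g" "\<forall>y\<in>{a..b}. f y = g y"
  shows "\<forall>y\<in>{a..b}. (cderiv ^^ j) f y = (cderiv ^^ j) g y"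
proof (induction j)
  case (Suc j)
  show ?case
    using cderiv_eq_on_interval[OF assms(1) _ smooth_fun_differentiable smooth_fun_differentiable Suc]
      smooth_fun_funpow_cderiv assms(2,3) by simp
qed (use assms(4) in simp)

lemma diff_op_eq_on_interval:
  assumes "a < b" "smooth_fun f" "smooth_fun g" "\<forall>y\<in>{a..b}. f y = g y" "x \<in> {a..b}"
  shows "diff_op \<mu> f x = diff_op \<mu> g x"
  using funpow_cderiv_eq_on_interval[OF assms(1-4), of 1] assms(4,5) by (simp add: diff_op_def)

lemma cderiv_real_on_interval:
  assumes "a < b" "x \<in> {a..b}" "f differentiable (at x)" "\<forall>y\<in>{a..b}. f y \<in> \<real>"
  shows "cderiv f x \<in> \<real>"
proof -
  have "(f has_vector_derivative cderiv f x) (at x within {a..b})"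
    using assms(3) unfolding cderiv_def
    by (metis has_vector_derivative_at_within vector_derivative_works)
  then have "((\<lambda>y. Im (f y)) has_vector_derivative Im (cderiv f x)) (at x within {a..b})"
    by (simp add: has_field_derivative_Im has_real_derivative_iff_has_vector_derivative[symmetric])
  moreover have "((\<lambda>y. Im (f y)) has_vector_derivative 0) (at x within {a..b})"
    by (rule has_vector_derivative_transform[OF assms(2) _ has_vector_derivative_const])
      (use assms(4) in \<open>auto simp: complex_is_Real_iff\<close>)
  ultimately have "Im (cderiv f x) = 0"
    using vector_derivative_unique_within_closed_interval[of a b x] assms(1,2)
    by (simp add: cbox_interval)
  then show ?thesis by (simp add: complex_is_Real_iff)
qed

lemma funpow_cderiv_real_on_interval:
  assumes "a < b" "smooth_fun f" "\<forall>y\<in>{a..b}. f y \<in> \<real>"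
  shows "\<forall>y\<in>{a..b}. (cderiv ^^ j) f y \<in> \<real>"
proof (induction j)
  case (Suc j)
  show ?case
    using cderiv_real_on_interval[OF assms(1) _ smooth_fun_differentiable Suc]
      smooth_fun_funpow_cderiv assms(2) by simp
qed (use assms(3) in simp)

lemma diff_op_real_on_interval:
  fixes \<mu> :: real
  assumes "a < b" "smooth_fun f" "\<forall>y\<in>{a..b}. f y \<in> \<real>"
  shows "\<forall>y\<in>{a..b}. diff_op (of_real \<mu>) f y \<in> \<real>"
  using funpow_cderiv_real_on_interval[OF assms, of 1] assms(3) by (simp add: diff_op_def)

lemma zero_at_least_Suc:
  "zero_at_least f c (Suc m) \<longleftrightarrow> f c = 0 \<and> zero_at_least (cderiv f) c m"
  unfolding zero_at_least_def
  by (metis less_Suc_eq_0_disj funpow_0 funpow_cderiv_Suc_right zero_less_Suc Suc_less_eq)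

lemma zero_at_least_imp_zero: "zero_at_least f c r \<Longrightarrow> 0 < r \<Longrightarrow> f c = 0"
  by (metis funpow_0 zero_at_least_def)

lemma zero_at_least_mono: "zero_at_least f c r \<Longrightarrow> s \<le> r \<Longrightarrow> zero_at_least f c s"
  by (simp add: zero_at_least_def)

lemma zero_at_least_diff_op:
  assumes "smooth_fun f" "zero_at_least f c r"
  shows "zero_at_least (diff_op \<mu> f) c (r - 1)"
  using assms(2) unfolding zero_at_least_def funpow_cderiv_diff_op[OF assms(1)]
  by (simp add: less_diff_conv del: funpow.simps)

lemma funpow_cderiv_diff_op_at_zero:
  assumes "smooth_fun f" "zero_at_least f c (Suc r)"
  shows "(cderiv ^^ r) (diff_op \<mu> f) c = (cderiv ^^ Suc r) f c"
  using assms(2) unfolding zero_at_least_def funpow_cderiv_diff_op[OF assms(1)]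
  by (simp del: funpow.simps)

lemma has_real_derivative_Re_smooth:
  "smooth_fun f \<Longrightarrow> ((\<lambda>t. Re (f t)) has_real_derivative Re (cderiv f x)) (at x)"
  by (rule has_field_derivative_Re[OF smooth_fun_has_vector_derivative])

lemma eventually_Re_pos_at_point:
  assumes "smooth_fun f" "s * Re (f a) > 0"
  shows "eventually (\<lambda>x. s * Re (f x) > 0) (at a)"
proof -
  have "isCont (\<lambda>x. s * Re (f x)) a"
    using has_vector_derivative_continuous[OF smooth_fun_has_vector_derivative[OF assms(1)]]
    by (intro continuous_intros isCont_Re)
  from order_tendstoD(1)[OF this[unfolded isCont_def] assms(2)] show ?thesis .
qed

lemma eventually_sign_at_right:
  assumes "smooth_fun f" "zero_at_least f a m" "s * Re ((cderiv ^^ m) f a) > 0"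
  shows "eventually (\<lambda>x. s * Re (f x) > 0) (at_right a)"
  using assms
proof (induction m arbitrary: f)
  case 0
  then show ?case using eventually_Re_pos_at_point eventually_at_split by fastforce
next
  case (Suc m)
  have fa: "f a = 0" and za: "zero_at_least (cderiv f) a m"
    using Suc.prems(2) by (auto simp: zero_at_least_Suc)
  have "s * Re ((cderiv ^^ m) (cderiv f) a) > 0"
    using Suc.prems(3) by (simp add: funpow_cderiv_commute)
  then have "eventually (\<lambda>y. s * Re (cderiv f y) > 0) (at_right a)"
    by (rule Suc.IH[OF smooth_fun_cderiv[OF Suc.prems(1)] za])
  then obtain e where "e > a" and e: "\<And>y. a < y \<Longrightarrow> y < e \<Longrightarrow> s * Re (cderiv f y) > 0"
    by (auto simp: eventually_at_right_field)
  have "s * Re (f x) > 0" if "a < x" "x < e" for x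
  proof -
    obtain z where z: "a < z" "z < x" "Re (f x) - Re (f a) = (x - a) * Re (cderiv f z)"
      using MVT2[OF \<open>a < x\<close> has_real_derivative_Re_smooth[OF Suc.prems(1)]] by blast
    then have "s * Re (f x) = (x - a) * (s * Re (cderiv f z))" using fa by simp
    moreover have "s * Re (cderiv f z) > 0" using e z that by simp
    moreover have "x - a > 0" using that by simp
    ultimately show ?thesis by (metis mult_pos_pos)
  qed
  then show ?case using \<open>e > a\<close> by (auto simp: eventually_at_right_field)
qed

lemma eventually_sign_at_left:
  assumes "smooth_fun f" "zero_at_least f b m" "(-1) ^ m * s * Re ((cderiv ^^ m) f b) > 0"
  shows "eventually (\<lambda>x. s * Re (f x) > 0) (at_left b)"
  using assms
proof (induction m arbitrary: f s)
  case 0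
  then show ?case using eventually_Re_pos_at_point eventually_at_split by fastforce
next
  case (Suc m)
  have fb: "f b = 0" and zb: "zero_at_least (cderiv f) b m"
    using Suc.prems(2) by (auto simp: zero_at_least_Suc)
  have "(-1) ^ m * (- s) * Re ((cderiv ^^ m) (cderiv f) b) > 0"
    using Suc.prems(3) by (simp add: funpow_cderiv_commute)
  then have "eventually (\<lambda>y. - s * Re (cderiv f y) > 0) (at_left b)"
    by (rule Suc.IH[OF smooth_fun_cderiv[OF Suc.prems(1)] zb])
  then obtain e where "e < b" and e: "\<And>y. e < y \<Longrightarrow> y < b \<Longrightarrow> - s * Re (cderiv f y) > 0"
    by (auto simp: eventually_at_left_field)
  have "s * Re (f x) > 0" if "e < x" "x < b" for x
  proof -
    obtain z where z: "x < z" "z < b" "Re (f b) - Re (f x) = (b - x) * Re (cderiv f z)"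
      using MVT2[OF \<open>x < b\<close> has_real_derivative_Re_smooth[OF Suc.prems(1)]] by blast
    then have "s * Re (f x) = (b - x) * (- s * Re (cderiv f z))" using fb by (simp add: algebra_simps)
    moreover have "- s * Re (cderiv f z) > 0" using e z that by simp
    moreover have "b - x > 0" using that by simp
    ultimately show ?thesis by (metis mult_pos_pos)
  qed
  then show ?case using \<open>e < b\<close> by (auto simp: eventually_at_left_field)
qed

lemma Re_nonzero_if_Reals: "z \<in> \<real> \<Longrightarrow> z \<noteq> 0 \<Longrightarrow> Re z \<noteq> 0"
  by (auto simp: complex_is_Real_iff complex_eq_iff)

lemma nonneg_imp_jet_pos_at_left:
  assumes "a < b" "smooth_fun f" "\<forall>x\<in>{a..b}. f x \<in> \<real> \<and> Re (f x) \<ge> 0"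
    and "zero_order_exactly f a m"
  shows "Re ((cderiv ^^ m) f a) > 0"
proof (rule ccontr)
  assume "\<not> ?thesis"
  moreover have "Re ((cderiv ^^ m) f a) \<noteq> 0"
    using funpow_cderiv_real_on_interval[OF assms(1,2)] assms(1,3,4)
    by (intro Re_nonzero_if_Reals) (auto simp: zero_order_exactly_def)
  ultimately have "(-1) * Re ((cderiv ^^ m) f a) > 0" by simp
  with assms(4) have "eventually (\<lambda>x. (-1) * Re (f x) > 0) (at_right a)"
    by (intro eventually_sign_at_right[OF assms(2)]) (auto simp: zero_order_exactly_def)
  then have "eventually (\<lambda>x. (-1) * Re (f x) > 0 \<and> x \<in> {a<..<b}) (at_right a)"
    using eventually_at_right_real[OF assms(1)] by (rule eventually_conj)
  then obtain x where "(-1) * Re (f x) > 0" "x \<in> {a<..<b}"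
    using eventually_happens by fastforce
  moreover have "Re (f x) \<ge> 0" using assms(3) \<open>x \<in> {a<..<b}\<close> by simp
  ultimately show False by simp
qed

lemma nonneg_imp_jet_sign_at_right:
  assumes "a < b" "smooth_fun f" "\<forall>x\<in>{a..b}. f x \<in> \<real> \<and> Re (f x) \<ge> 0"
    and "zero_order_exactly f b m"
  shows "(-1) ^ m * Re ((cderiv ^^ m) f b) > 0"
proof (rule ccontr)
  assume "\<not> ?thesis"
  moreover have "Re ((cderiv ^^ m) f b) \<noteq> 0"
    using funpow_cderiv_real_on_interval[OF assms(1,2)] assms(1,3,4)
    by (intro Re_nonzero_if_Reals) (auto simp: zero_order_exactly_def)
  ultimately have "(-1) ^ m * (-1) * Re ((cderiv ^^ m) f b) > 0"
    by (cases "even m") auto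
  with assms(4) have "eventually (\<lambda>x. (-1) * Re (f x) > 0) (at_left b)"
    by (intro eventually_sign_at_left[OF assms(2)]) (auto simp: zero_order_exactly_def)
  then have "eventually (\<lambda>x. (-1) * Re (f x) > 0 \<and> x \<in> {a<..<b}) (at_left b)"
    using eventually_at_left_real[OF assms(1)] by (rule eventually_conj)
  then obtain x where "(-1) * Re (f x) > 0" "x \<in> {a<..<b}"
    using eventually_happens by fastforce
  moreover have "Re (f x) \<ge> 0" using assms(3) \<open>x \<in> {a<..<b}\<close> by simp
  ultimately show False by simp
qed

lemma sign_change_imp_zero:
  fixes g :: "real \<Rightarrow> real"
  assumes "a < b" "continuous_on {a..b} g"
    and "eventually (\<lambda>x. g x < 0) (at_right a)" "eventually (\<lambda>x. g x > 0) (at_left b)"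
  shows "\<exists>z\<in>{a<..<b}. g z = 0"
proof -
  have "eventually (\<lambda>x. g x < 0 \<and> x \<in> {a<..<b}) (at_right a)"
    using assms(3) eventually_at_right_real[OF assms(1)] by (rule eventually_conj)
  then obtain x1 where x1: "g x1 < 0" "a < x1" "x1 < b"
    using eventually_happens by fastforce
  have "eventually (\<lambda>x. g x > 0 \<and> x \<in> {x1<..<b}) (at_left b)"
    using assms(4) eventually_at_left_real[OF x1(3)] by (rule eventually_conj)
  then obtain x2 where x2: "g x2 > 0" "x1 < x2" "x2 < b"
    using eventually_happens by fastforce
  have "continuous_on {x1..x2} g"
    using assms(2) x1 x2 by (auto elim: continuous_on_subset)
  then obtain z where "x1 \<le> z" "z \<le> x2" "g z = 0"
    using IVT'[of g x1 0 x2] x1 x2 by auto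
  then show ?thesis using x1 x2 by auto
qed

text \<open>The instance of \<open>ext_chebyshev W q a b\<close> that the argument needs: \<open>q + 1\<close> zeros, all at the
  end points except possibly one. Unlike \<open>ext_chebyshev\<close> itself, this weaker property passes by
  Rolle's theorem from \<open>E(mus)\<close> to \<open>E(\<mu> # mus)\<close> for real \<open>\<mu>\<close>.\<close>

definition ext_chebyshev_at_ends :: "(real \<Rightarrow> complex) set \<Rightarrow> nat \<Rightarrow> real \<Rightarrow> real \<Rightarrow> bool" where
  "ext_chebyshev_at_ends W q a b \<longleftrightarrow>
     (\<forall>\<phi>\<in>W. \<forall>r s. (\<forall>x\<in>{a..b}. \<phi> x \<in> \<real>) \<longrightarrow> r + s = q \<longrightarrow>
        zero_at_least \<phi> a r \<longrightarrow> zero_at_least \<phi> b s \<longrightarrow>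
        (\<exists>z\<in>{a<..<b}. \<phi> z = 0) \<or> zero_at_least \<phi> a (Suc r) \<longrightarrow> (\<forall>x\<in>{a..b}. \<phi> x = 0))"

lemma ext_chebyshev_imp_at_ends:
  assumes "ext_chebyshev W q a b" "a < b"
  shows "ext_chebyshev_at_ends W q a b"
  unfolding ext_chebyshev_at_ends_def
proof (rule ballI, intro allI impI)
  fix \<phi> r s
  assume \<phi>: "\<phi> \<in> W" and "\<forall>x\<in>{a..b}. \<phi> x \<in> \<real>" and rs: "r + s = q"
    and za: "zero_at_least \<phi> a r" and zb: "zero_at_least \<phi> b s"
    and extra: "(\<exists>z\<in>{a<..<b}. \<phi> z = 0) \<or> zero_at_least \<phi> a (Suc r)"
  show "\<forall>x\<in>{a..b}. \<phi> x = 0"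
  proof (rule ccontr)
    assume "\<not> (\<forall>x\<in>{a..b}. \<phi> x = 0)"
    then have bound: "\<And>S k. finite S \<Longrightarrow> S \<subseteq> {a..b} \<Longrightarrow> \<forall>c\<in>S. zero_at_least \<phi> c (k c) \<Longrightarrow> sum k S \<le> q"
      using assms(1) \<phi> unfolding ext_chebyshev_def by blast
    from extra show False
    proof
      assume "\<exists>z\<in>{a<..<b}. \<phi> z = 0"
      then obtain z where z: "a < z" "z < b" "\<phi> z = 0" by auto
      define k where "k c = (if c = a then r else if c = b then s else 1)" for c
      have "sum k {a, z, b} \<le> q"
        by (rule bound) (use z za zb in \<open>auto simp: k_def zero_at_least_def\<close>)
      then show False using z rs by (simp add: k_def)
    next
      assume "zero_at_least \<phi> a (Suc r)"
      define k where "k c = (if c = a then Suc r else s)" for c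
      have "sum k {a, b} \<le> q"
        by (rule bound) (use \<open>zero_at_least \<phi> a (Suc r)\<close> zb assms(2) in \<open>auto simp: k_def\<close>)
      then show False using assms(2) rs by (simp add: k_def)
    qed
  qed
qed

lemma diff_op_Rolle:
  fixes \<mu> :: real
  assumes "a < b" "smooth_fun \<phi>" "\<forall>y\<in>{a..b}. \<phi> y \<in> \<real>"
    and "a \<le> x1" "x1 < x2" "x2 \<le> b" "P \<Longrightarrow> \<phi> x1 = 0" "P \<Longrightarrow> \<phi> x2 = 0"
  shows "\<exists>\<xi>\<in>{x1<..<x2}. P \<longrightarrow> diff_op (of_real \<mu>) \<phi> \<xi> = 0"
proof (cases P)
  case True
  define h where "h t = exp (- \<mu> * t) * Re (\<phi> t)" for t
  have dh: "DERIV h t :> exp (- \<mu> * t) * (Re (cderiv \<phi> t) - \<mu> * Re (\<phi> t))" for t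
    unfolding h_def using smooth_fun_has_vector_derivative[OF assms(2)]
    by (auto intro!: derivative_eq_intros simp: algebra_simps)
  obtain \<xi> where \<xi>: "x1 < \<xi>" "\<xi> < x2"
    and "h x2 - h x1 = (x2 - x1) * (exp (- \<mu> * \<xi>) * (Re (cderiv \<phi> \<xi>) - \<mu> * Re (\<phi> \<xi>)))"
    using MVT2[OF assms(5) dh] by blast
  moreover have "h x2 - h x1 = 0" using True assms(7,8) by (simp add: h_def)
  ultimately have "Re (diff_op (of_real \<mu>) \<phi> \<xi>) = 0" by (simp add: diff_op_def)
  moreover have "diff_op (of_real \<mu>) \<phi> \<xi> \<in> \<real>"
    using diff_op_real_on_interval[OF assms(1-3)] \<xi> assms(4,6) by simp
  ultimately have "diff_op (of_real \<mu>) \<phi> \<xi> = 0" by (simp add: complex_is_Real_iff complex_eq_iff)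
  then show ?thesis using \<xi> by auto
next
  case False
  then show ?thesis using assms(5) by (intro bexI[of _ "(x1 + x2) / 2"]) auto
qed

lemma diff_op_vanishes_if_extra_zero:
  fixes \<mu> :: real
  assumes ab: "a < b" and cheb: "ext_chebyshev (exp_poly_space mus) q a b"
    and \<phi>: "\<phi> \<in> exp_poly_space (of_real \<mu> # mus)" and real: "\<forall>y\<in>{a..b}. \<phi> y \<in> \<real>"
    and rs: "r + s = Suc q" and za: "zero_at_least \<phi> a r" and zb: "zero_at_least \<phi> b s"
    and extra: "(\<exists>z\<in>{a<..<b}. \<phi> z = 0) \<or> zero_at_least \<phi> a (Suc r)"
  shows "\<forall>x\<in>{a..b}. diff_op (of_real \<mu>) \<phi> x = 0"
proof (rule ccontr)
  define \<psi> where "\<psi> = diff_op (of_real \<mu>) \<phi>"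
  have sm: "smooth_fun \<phi>" using \<phi> by (simp add: exp_poly_space_def)
  have \<psi>a: "zero_at_least \<psi> a (r - 1)" and \<psi>b: "zero_at_least \<psi> b (s - 1)"
    unfolding \<psi>_def using zero_at_least_diff_op[OF sm] za zb by auto
  assume "\<not> (\<forall>x\<in>{a..b}. diff_op (of_real \<mu>) \<phi> x = 0)"
  then have bound: "\<And>S k. finite S \<Longrightarrow> S \<subseteq> {a..b} \<Longrightarrow> \<forall>c\<in>S. zero_at_least \<psi> c (k c) \<Longrightarrow> sum k S \<le> q"
    using cheb diff_op_in_exp_poly_space[OF \<phi>] unfolding ext_chebyshev_def \<psi>_def by blast
  have "\<phi> a = 0" if "1 \<le> r" using zero_at_least_imp_zero[OF za] that by simp
  moreover have "\<phi> b = 0" if "1 \<le> s" using zero_at_least_imp_zero[OF zb] that by simp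
  \<comment> \<open>Rolle points exist only where \<open>\<phi>\<close> vanishes at both ends; the others get weight 0 in \<open>k\<close>.\<close>
  note Rolle = diff_op_Rolle[OF ab sm real, of _ _ _ \<mu>, folded \<psi>_def]
  from extra show False
  proof
    assume "\<exists>z\<in>{a<..<b}. \<phi> z = 0"
    then obtain z where z: "a < z" "z < b" "\<phi> z = 0" by auto
    obtain \<xi>1 where \<xi>1: "a < \<xi>1" "\<xi>1 < z" "1 \<le> r \<longrightarrow> \<psi> \<xi>1 = 0"
      using Rolle[of a z "1 \<le> r"] z \<open>1 \<le> r \<Longrightarrow> \<phi> a = 0\<close> by auto
    obtain \<xi>2 where \<xi>2: "z < \<xi>2" "\<xi>2 < b" "1 \<le> s \<longrightarrow> \<psi> \<xi>2 = 0"
      using Rolle[of z b "1 \<le> s"] z \<open>1 \<le> s \<Longrightarrow> \<phi> b = 0\<close> by auto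
    define k where "k c = (if c = a then r - 1 else if c = b then s - 1
      else if c = \<xi>1 then of_bool (1 \<le> r) else of_bool (1 \<le> s))" for c
    have "sum k {a, \<xi>1, \<xi>2, b} \<le> q"
      by (rule bound) (use z \<xi>1 \<xi>2 \<psi>a \<psi>b in \<open>auto simp: k_def zero_at_least_def\<close>)
    then show False using z \<xi>1 \<xi>2 rs by (cases r; cases s) (auto simp: k_def)
  next
    assume za': "zero_at_least \<phi> a (Suc r)"
    then have \<psi>a': "zero_at_least \<psi> a r"
      unfolding \<psi>_def using zero_at_least_diff_op[OF sm za'] by simp
    obtain \<xi> where \<xi>: "a < \<xi>" "\<xi> < b" "1 \<le> s \<longrightarrow> \<psi> \<xi> = 0"
      using Rolle[of a b "1 \<le> s"] ab zero_at_least_imp_zero[OF za'] \<open>1 \<le> s \<Longrightarrow> \<phi> b = 0\<close>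
      by auto
    define k where "k c = (if c = a then r else if c = b then s - 1 else of_bool (1 \<le> s))" for c
    have "sum k {a, \<xi>, b} \<le> q"
      by (rule bound) (use \<xi> \<psi>a' \<psi>b in \<open>auto simp: k_def zero_at_least_def\<close>)
    then show False using \<xi> rs by (cases s) (auto simp: k_def)
  qed
qed

lemma ext_chebyshev_at_ends_Cons:
  fixes \<mu> :: real
  assumes "a < b" "ext_chebyshev (exp_poly_space mus) q a b"
  shows "ext_chebyshev_at_ends (exp_poly_space (of_real \<mu> # mus)) (Suc q) a b"
  unfolding ext_chebyshev_at_ends_def
proof (rule ballI, intro allI impI)
  fix \<phi> r s
  assume \<phi>: "\<phi> \<in> exp_poly_space (of_real \<mu> # mus)" and real: "\<forall>x\<in>{a..b}. \<phi> x \<in> \<real>"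
    and "r + s = Suc q" "zero_at_least \<phi> a r" "zero_at_least \<phi> b s"
    and extra: "(\<exists>z\<in>{a<..<b}. \<phi> z = 0) \<or> zero_at_least \<phi> a (Suc r)"
  have sm: "smooth_fun \<phi>" using \<phi> by (simp add: exp_poly_space_def)
  have "\<forall>x\<in>{a..b}. diff_op (of_real \<mu>) \<phi> x = 0"
    using diff_op_vanishes_if_extra_zero[OF assms \<phi> real] \<open>r + s = Suc q\<close> \<open>zero_at_least \<phi> a r\<close>
      \<open>zero_at_least \<phi> b s\<close> extra by blast
  then have \<phi>_exp: "\<phi> x = exp (of_real \<mu> * of_real (x - a)) * \<phi> a" if "x \<in> {a..b}" for x
    using diff_op_eq_0_imp_exp[OF sm _ _ that] assms(1) by simp
  have "\<phi> a = 0" using extra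
  proof
    assume "\<exists>z\<in>{a<..<b}. \<phi> z = 0"
    then obtain z where "z \<in> {a<..<b}" "\<phi> z = 0" by blast
    then show ?thesis using \<phi>_exp[of z] by simp
  qed (simp add: zero_at_least_imp_zero)
  then show "\<forall>x\<in>{a..b}. \<phi> x = 0" using \<phi>_exp by simp
qed

lemma zero_at_least_lincomb:
  assumes "finite K" "\<forall>j\<in>K. smooth_fun (f j)" "\<forall>j\<in>K. zero_at_least (f j) c r"
  shows "zero_at_least (\<lambda>x. \<Sum>j\<in>K. w j * f j x) c r"
  using assms by (simp add: zero_at_least_def funpow_cderiv_lincomb)

lemma funpow_cderiv_lincomb_leading:
  assumes "finite K" "\<forall>j\<in>K. smooth_fun (f j)" "k \<in> K" "\<forall>j\<in>K - {k}. zero_at_least (f j) c (Suc r)"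
  shows "(cderiv ^^ r) (\<lambda>x. \<Sum>j\<in>K. w j * f j x) c = w k * (cderiv ^^ r) (f k) c"
proof -
  have "(cderiv ^^ r) (\<lambda>x. \<Sum>j\<in>K. w j * f j x) c = (\<Sum>j\<in>K. w j * (cderiv ^^ r) (f j) c)"
    by (simp add: funpow_cderiv_lincomb[OF assms(1,2)])
  also have "\<dots> = w k * (cderiv ^^ r) (f k) c"
    using assms(4) by (intro sum.remove[OF assms(1,3), THEN trans] sum.neutral)
      (auto simp: zero_at_least_def)
  finally show ?thesis .
qed

lemma tail_jets_at_left:
  fixes u :: "nat \<Rightarrow> real"
  assumes "\<forall>j\<le>m. smooth_fun (f j)" "\<forall>j\<le>m. zero_at_least (f j) a (j - 1)" "i < m"
  defines "T \<equiv> \<lambda>x. \<Sum>j\<in>{i<..m}. of_real (u j) * f j x"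
  shows "zero_at_least T a i" "(cderiv ^^ i) T a = of_real (u (Suc i)) * (cderiv ^^ i) (f (Suc i)) a"
proof -
  have smooth: "\<forall>j\<in>{i<..m}. smooth_fun (f j)" using assms(1) by simp
  have za: "zero_at_least (f j) a i" "j \<noteq> Suc i \<Longrightarrow> zero_at_least (f j) a (Suc i)"
    if "j \<in> {i<..m}" for j
    using assms(2) zero_at_least_mono[of "f j" a "j - 1"] that by auto
  show "zero_at_least T a i"
    unfolding T_def using za(1) by (intro zero_at_least_lincomb[OF _ smooth]) auto
  show "(cderiv ^^ i) T a = of_real (u (Suc i)) * (cderiv ^^ i) (f (Suc i)) a"
    unfolding T_def using za(2) assms(3)
    by (intro funpow_cderiv_lincomb_leading[OF _ smooth]) auto
qed

text \<open>At \<open>b\<close> a tail is read off through the complementary head, which agrees with its negative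
  on \<open>[a, b]\<close> because the full combination vanishes there.\<close>

lemma tail_jets_at_right:
  fixes u :: "nat \<Rightarrow> real"
  assumes "a < b" "\<forall>j\<le>m. smooth_fun (f j)" "\<forall>j\<le>m. zero_at_least (f j) b (m - j - 1)" "i < m"
    and "\<forall>x\<in>{a..b}. (\<Sum>j\<le>m. of_real (u j) * f j x) = 0"
  defines "T \<equiv> \<lambda>x. \<Sum>j\<in>{i<..m}. of_real (u j) * f j x"
  shows "zero_at_least T b (m - 1 - i)"
    "(cderiv ^^ (m - 1 - i)) T b = - of_real (u i) * (cderiv ^^ (m - 1 - i)) (f i) b"
proof -
  define H where "H = (\<lambda>x. \<Sum>j\<le>i. of_real (- u j) * f j x)"
  have smooth: "\<forall>j\<in>{i<..m}. smooth_fun (f j)" "\<forall>j\<in>{..i}. smooth_fun (f j)"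
    using assms(2,4) by auto
  have split: "{..m} = {..i} \<union> {i<..m}" using assms(4) by auto
  have TH: "T x = H x" if "x \<in> {a..b}" for x
  proof -
    have "(\<Sum>j\<le>i. of_real (u j) * f j x) + T x = 0"
      using assms(5) that unfolding T_def split by (subst (asm) sum.union_disjoint) auto
    then show ?thesis by (simp add: H_def sum_negf eq_neg_iff_add_eq_0 add.commute)
  qed
  have "smooth_fun T" unfolding T_def by (rule smooth_fun_lincomb[OF _ smooth(1)]) simp
  moreover have "smooth_fun H" unfolding H_def by (rule smooth_fun_lincomb[OF _ smooth(2)]) simp
  ultimately have "\<forall>y\<in>{a..b}. (cderiv ^^ r) T y = (cderiv ^^ r) H y" for r
    using funpow_cderiv_eq_on_interval[OF assms(1)] TH by blast
  with assms(1)
  have jets: "(cderiv ^^ r) T b = (cderiv ^^ r) H b" for r by simp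
  have zb: "zero_at_least (f j) b (m - 1 - i)" "j \<noteq> i \<Longrightarrow> zero_at_least (f j) b (Suc (m - 1 - i))"
    if "j \<in> {..i}" for j
    using assms(3,4) zero_at_least_mono[of "f j" b "m - j - 1"] that by auto
  have "zero_at_least H b (m - 1 - i)"
    unfolding H_def using zb(1) by (intro zero_at_least_lincomb[OF _ smooth(2)]) auto
  then show "zero_at_least T b (m - 1 - i)" unfolding zero_at_least_def jets .
  from zb(2) have "\<forall>j\<in>{..i} - {i}. zero_at_least (f j) b (Suc (m - 1 - i))" by blast
  from funpow_cderiv_lincomb_leading[OF _ smooth(2) _ this, of "\<lambda>j. of_real (- u j)"]
  show "(cderiv ^^ (m - 1 - i)) T b = - of_real (u i) * (cderiv ^^ (m - 1 - i)) (f i) b"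
    unfolding jets H_def by simp
qed

lemma ext_chebyshev_at_ends_jet_pos:
  assumes ab: "a < b" and cheb: "ext_chebyshev_at_ends W q a b"
    and \<phi>: "\<phi> \<in> W" "smooth_fun \<phi>" "\<forall>x\<in>{a..b}. \<phi> x \<in> \<real>"
    and rs: "r + s = q" and za: "zero_at_least \<phi> a r" and zb: "zero_at_least \<phi> b s"
    and sign_b: "(-1) ^ s * Re ((cderiv ^^ s) \<phi> b) > 0"
  shows "Re ((cderiv ^^ r) \<phi> a) > 0"
proof (rule ccontr)
  assume nonpos: "\<not> Re ((cderiv ^^ r) \<phi> a) > 0"
  have right: "eventually (\<lambda>x. 1 * Re (\<phi> x) > 0) (at_left b)"
    using eventually_sign_at_left[OF \<phi>(2) zb, of 1] sign_b by simp
  have "(\<exists>z\<in>{a<..<b}. \<phi> z = 0) \<or> zero_at_least \<phi> a (Suc r)"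
  proof (cases "Re ((cderiv ^^ r) \<phi> a) = 0")
    case True
    moreover have "(cderiv ^^ r) \<phi> a \<in> \<real>"
      using funpow_cderiv_real_on_interval[OF ab \<phi>(2,3)] ab by simp
    ultimately have "(cderiv ^^ r) \<phi> a = 0" by (simp add: complex_is_Real_iff complex_eq_iff)
    with za show ?thesis by (simp add: zero_at_least_def less_Suc_eq)
  next
    case False
    with nonpos have "(-1) * Re ((cderiv ^^ r) \<phi> a) > 0" by simp
    from eventually_sign_at_right[OF \<phi>(2) za this]
    have "eventually (\<lambda>x. Re (\<phi> x) < 0) (at_right a)" by simp
    moreover have "continuous_on {a..b} (\<lambda>x. Re (\<phi> x))"
      using smooth_fun_continuous_on[OF \<phi>(2)] by (intro continuous_intros)
    ultimately obtain z where "z \<in> {a<..<b}" "Re (\<phi> z) = 0"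
      using sign_change_imp_zero[OF ab] right by fastforce
    moreover have "\<phi> z \<in> \<real>" using \<phi>(3) \<open>z \<in> {a<..<b}\<close> by simp
    ultimately show ?thesis by (auto simp: complex_is_Real_iff complex_eq_iff)
  qed
  then have "\<forall>x\<in>{a..b}. \<phi> x = 0"
    using cheb \<phi>(1,3) rs za zb unfolding ext_chebyshev_at_ends_def by blast
  moreover obtain x where "1 * Re (\<phi> x) > 0" "x \<in> {a<..<b}"
    using eventually_happens[OF eventually_conj[OF right eventually_at_left_real[OF ab]]] by auto
  ultimately show False by simp
qed

text \<open>The jet conditions satisfied by a Bernstein basis that is non-negative on \<open>[a, b]\<close>.\<close>

definition positive_bernstein_system :: "(nat \<Rightarrow> real \<Rightarrow> complex) \<Rightarrow> nat \<Rightarrow> real \<Rightarrow> real \<Rightarrow> bool" where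
  "positive_bernstein_system P m a b \<longleftrightarrow>
     (\<forall>k\<le>m. smooth_fun (P k) \<and> (\<forall>x\<in>{a..b}. P k x \<in> \<real>) \<and>
        zero_at_least (P k) a k \<and> Re ((cderiv ^^ k) (P k) a) > 0 \<and>
        zero_at_least (P k) b (m - k) \<and> (-1) ^ (m - k) * Re ((cderiv ^^ (m - k)) (P k) b) > 0)"

lemma bernstein_basis_imp_positive_system:
  assumes "a < b" "bernstein_basis p n (exp_poly_space mus) a b"
    and "\<forall>k\<le>n. \<forall>x\<in>{a..b}. p k x \<in> \<real> \<and> Re (p k x) \<ge> 0"
  shows "positive_bernstein_system p n a b"
  using assms nonneg_imp_jet_pos_at_left[OF assms(1)] nonneg_imp_jet_sign_at_right[OF assms(1)]
  unfolding positive_bernstein_system_def bernstein_basis_def zero_order_exactly_def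
  by (auto simp: exp_poly_space_def)

lemma lincomb_at_left_end:
  assumes "\<forall>k\<le>m. zero_at_least (P k) a k"
  shows "(\<Sum>k\<le>m. w k * P k a) = w 0 * P 0 a"
proof -
  have "(\<Sum>k\<le>m. w k * P k a) = w 0 * P 0 a + (\<Sum>k\<in>{..m} - {0}. w k * P k a)"
    by (rule sum.remove) auto
  also have "(\<Sum>k\<in>{..m} - {0}. w k * P k a) = 0"
    using assms by (intro sum.neutral) (auto simp: zero_at_least_imp_zero)
  finally show ?thesis by simp
qed

lemma lincomb_at_right_end:
  assumes "\<forall>k\<le>m. zero_at_least (P k) b (m - k)"
  shows "(\<Sum>k\<le>m. w k * P k b) = w m * P m b"
proof -
  have "(\<Sum>k\<le>m. w k * P k b) = w m * P m b + (\<Sum>k\<in>{..m} - {m}. w k * P k b)"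
    by (rule sum.remove) auto
  also have "(\<Sum>k\<in>{..m} - {m}. w k * P k b) = 0"
    using assms by (intro sum.neutral) (auto simp: zero_at_least_imp_zero)
  finally show ?thesis by simp
qed

lemma diff_op_exp_expansion:
  fixes c :: "nat \<Rightarrow> real" and C l \<mu> :: real
  assumes "a < b" "\<forall>k\<le>n. smooth_fun (p k)"
    and "\<forall>x\<in>{a..b}. (\<Sum>k\<le>n. of_real (c k) * p k x) = of_real (C * exp (l * x))"
  shows "\<forall>x\<in>{a..b}. (\<Sum>k\<le>n. of_real (c k) * diff_op (of_real \<mu>) (p k) x) =
    of_real (C * (l - \<mu>) * exp (l * x))"
proof
  fix x assume x: "x \<in> {a..b}"
  have "diff_op (of_real \<mu>) (\<lambda>x. \<Sum>k\<le>n. of_real (c k) * p k x) x =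
      diff_op (of_real \<mu>) (\<lambda>x. of_real C * exp_fun (of_real l) x) x"
    using assms(2,3) x
    by (intro diff_op_eq_on_interval[OF assms(1) smooth_fun_lincomb smooth_fun_exp_fun])
      (auto simp: exp_fun_of_real)
  then show "(\<Sum>k\<le>n. of_real (c k) * diff_op (of_real \<mu>) (p k) x) = of_real (C * (l - \<mu>) * exp (l * x))"
    using assms(2) unfolding diff_op_exp_fun by (simp add: diff_op_lincomb exp_fun_of_real)
qed

lemma positive_bernstein_system_tail:
  fixes P :: "nat \<Rightarrow> real \<Rightarrow> complex" and u :: "nat \<Rightarrow> real" and \<mu> :: real
  assumes ab: "a < b" and P: "positive_bernstein_system P m a b"
    and DP: "\<forall>j\<le>m. diff_op (of_real \<mu>) (P j) \<in> exp_poly_space mus"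
    and sum: "\<forall>x\<in>{a..b}. (\<Sum>j\<le>m. of_real (u j) * diff_op (of_real \<mu>) (P j) x) = 0"
    and i: "i < m"
  defines "T \<equiv> \<lambda>x. \<Sum>j\<in>{i<..m}. of_real (u j) * diff_op (of_real \<mu>) (P j) x"
  shows "smooth_fun T" "\<forall>x\<in>{a..b}. T x \<in> \<real>" "T \<in> exp_poly_space mus"
    "zero_at_least T a i" "Re ((cderiv ^^ i) T a) = u (Suc i) * Re ((cderiv ^^ Suc i) (P (Suc i)) a)"
    "zero_at_least T b (m - 1 - i)"
    "(-1) ^ (m - 1 - i) * Re ((cderiv ^^ (m - 1 - i)) T b) =
      u i * ((-1) ^ (m - i) * Re ((cderiv ^^ (m - i)) (P i) b))"
proof -
  define D where "D j = diff_op (of_real \<mu>) (P j)" for j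
  have smP: "\<forall>j\<le>m. smooth_fun (P j)" using P by (simp add: positive_bernstein_system_def)
  then have smD: "\<forall>j\<le>m. smooth_fun (D j)" by (simp add: D_def smooth_fun_diff_op)
  have "zero_at_least (D j) a (j - 1) \<and> zero_at_least (D j) b (m - j - 1)" if "j \<le> m" for j
    using zero_at_least_diff_op[of "P j"] smP P that
    unfolding positive_bernstein_system_def D_def by blast
  then have zaD: "\<forall>j\<le>m. zero_at_least (D j) a (j - 1)"
    and zbD: "\<forall>j\<le>m. zero_at_least (D j) b (m - j - 1)" by blast+
  have mi: "m - i = Suc (m - 1 - i)" using i by simp
  have "zero_at_least (P i) b (Suc (m - 1 - i))" "zero_at_least (P (Suc i)) a (Suc i)"
    using P i mi unfolding positive_bernstein_system_def by (metis less_imp_le Suc_leI)+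
  then have "(cderiv ^^ i) (D (Suc i)) a = (cderiv ^^ Suc i) (P (Suc i)) a"
    "(cderiv ^^ (m - 1 - i)) (D i) b = (cderiv ^^ (m - i)) (P i) b"
    unfolding D_def mi using smP i
    by (auto intro!: funpow_cderiv_diff_op_at_zero simp del: funpow.simps)
  then show "zero_at_least T a i" "Re ((cderiv ^^ i) T a) = u (Suc i) * Re ((cderiv ^^ Suc i) (P (Suc i)) a)"
    "zero_at_least T b (m - 1 - i)"
    "(-1) ^ (m - 1 - i) * Re ((cderiv ^^ (m - 1 - i)) T b) =
      u i * ((-1) ^ (m - i) * Re ((cderiv ^^ (m - i)) (P i) b))"
    using tail_jets_at_left[OF smD zaD i, of u] tail_jets_at_right[OF ab smD zbD i, of u] sum
    unfolding T_def D_def mi by simp_all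
  show "smooth_fun T" unfolding T_def by (rule smooth_fun_lincomb) (use smD in \<open>auto simp: D_def\<close>)
  show "\<forall>x\<in>{a..b}. T x \<in> \<real>"
    using diff_op_real_on_interval[OF ab] smP P
    unfolding T_def positive_bernstein_system_def by (auto intro!: sum_in_Reals)
  show "T \<in> exp_poly_space mus" unfolding T_def by (rule exp_poly_space_lincomb) (use DP in auto)
qed

lemma positive_bernstein_system_tails:
  fixes P :: "nat \<Rightarrow> real \<Rightarrow> complex" and u :: "nat \<Rightarrow> real" and \<mu> C :: real
  assumes ab: "a < b" and m: "1 \<le> m" and P: "positive_bernstein_system P m a b"
    and DP: "\<forall>j\<le>m. diff_op (of_real \<mu>) (P j) \<in> exp_poly_space mus"
    and cheb: "ext_chebyshev_at_ends (exp_poly_space mus) (m - 1) a b"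
    and u: "\<forall>x\<in>{a..b}. (\<Sum>j\<le>m. of_real (u j) * P j x) = of_real (C * exp (\<mu> * x))" and "C > 0"
  shows "\<forall>j\<le>m. u j > 0"
    and "positive_bernstein_system
           (\<lambda>i x. \<Sum>j\<in>{i<..m}. of_real (u j) * diff_op (of_real \<mu>) (P j) x) (m - 1) a b"
proof -
  have smP: "\<forall>j\<le>m. smooth_fun (P j)" using P by (simp add: positive_bernstein_system_def)
  note tail = positive_bernstein_system_tail[OF ab P DP diff_op_exp_expansion[OF ab smP u, of \<mu>, simplified]]
  have "\<forall>k\<le>m. zero_at_least (P k) a k" using P by (simp add: positive_bernstein_system_def)
  from lincomb_at_left_end[OF this, of "\<lambda>j. of_real (u j)"]
  have "of_real (u 0) * P 0 a = of_real (C * exp (\<mu> * a))" using u ab by simp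
  from arg_cong[OF this, of Re] have "u 0 * Re (P 0 a) = C * exp (\<mu> * a)" by simp
  moreover have "Re (P 0 a) > 0" using P[unfolded positive_bernstein_system_def, rule_format, of 0] by simp
  ultimately have u0: "u 0 > 0"
    using \<open>C > 0\<close> by (metis exp_gt_zero mult_pos_pos zero_less_mult_pos2)
  have upos: "u i > 0" if "i \<le> m" for i
    using that
  proof (induction i)
    case (Suc i)
    then have "i < m" "u i > 0" by auto
    with tail P have "Re ((cderiv ^^ i) (\<lambda>x. \<Sum>j\<in>{i<..m}. of_real (u j) * diff_op (of_real \<mu>) (P j) x) a) > 0"
      by (intro ext_chebyshev_at_ends_jet_pos[OF ab cheb, of _ i "m - 1 - i"])
        (auto simp: positive_bernstein_system_def)
    with tail[OF \<open>i < m\<close>] P Suc.prems show ?case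
      by (auto simp: positive_bernstein_system_def zero_less_mult_iff)
  qed (use u0 in simp)
  then show "\<forall>j\<le>m. u j > 0" by blast
  show "positive_bernstein_system (\<lambda>i x. \<Sum>j\<in>{i<..m}. of_real (u j) * diff_op (of_real \<mu>) (P j) x) (m - 1) a b"
    unfolding positive_bernstein_system_def
  proof (intro allI impI)
    fix i assume "i \<le> m - 1"
    then have "i < m" "Suc i \<le> m" "i \<le> m" using m by auto
    with tail[OF \<open>i < m\<close>] upos P
    show "smooth_fun (\<lambda>x. \<Sum>j\<in>{i<..m}. of_real (u j) * diff_op (of_real \<mu>) (P j) x) \<and>
      (\<forall>x\<in>{a..b}. (\<Sum>j\<in>{i<..m}. of_real (u j) * diff_op (of_real \<mu>) (P j) x) \<in> \<real>) \<and>
      zero_at_least (\<lambda>x. \<Sum>j\<in>{i<..m}. of_real (u j) * diff_op (of_real \<mu>) (P j) x) a i \<and>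
      0 < Re ((cderiv ^^ i) (\<lambda>x. \<Sum>j\<in>{i<..m}. of_real (u j) * diff_op (of_real \<mu>) (P j) x) a) \<and>
      zero_at_least (\<lambda>x. \<Sum>j\<in>{i<..m}. of_real (u j) * diff_op (of_real \<mu>) (P j) x) b (m - 1 - i) \<and>
      0 < (-1) ^ (m - 1 - i) *
        Re ((cderiv ^^ (m - 1 - i)) (\<lambda>x. \<Sum>j\<in>{i<..m}. of_real (u j) * diff_op (of_real \<mu>) (P j) x) b)"
      by (auto simp: positive_bernstein_system_def)
  qed
qed

lemma sum_tails_telescope:
  fixes g c :: "nat \<Rightarrow> real" and X :: "nat \<Rightarrow> complex"
  shows "(\<Sum>i<n. of_real (g (Suc i) - g i) * (\<Sum>j\<in>{i<..n}. of_real (c j) * X j)) =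
    (\<Sum>j\<le>n. of_real (g j * c j) * X j) - of_real (g 0) * (\<Sum>j\<le>n. of_real (c j) * X j)"
proof (induction n)
  case (Suc n)
  define S where "S i m = (\<Sum>j\<in>{i<..m}. of_real (c j) * X j)" for i m
  define cX where "cX = of_real (c (Suc n)) * X (Suc n)"
  have "S i (Suc n) = S i n + cX" if "i < Suc n" for i
  proof -
    have "{i<..Suc n} = insert (Suc n) {i<..n}" using that by auto
    then show ?thesis by (simp add: S_def cX_def add.commute)
  qed
  then have "(\<Sum>i<Suc n. of_real (g (Suc i) - g i) * S i (Suc n)) =
      (\<Sum>i<Suc n. of_real (g (Suc i) - g i) * S i n) + of_real (\<Sum>i<Suc n. g (Suc i) - g i) * cX"
    by (simp add: distrib_left distrib_right sum.distrib sum_distrib_right del: of_real_diff)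
  also have "(\<Sum>i<Suc n. of_real (g (Suc i) - g i) * S i n) = (\<Sum>i<n. of_real (g (Suc i) - g i) * S i n)"
    by (simp add: S_def)
  also have "(\<Sum>i<Suc n. g (Suc i) - g i) = g (Suc n) - g 0" by (rule sum_lessThan_telescope)
  also have "(\<Sum>i<n. of_real (g (Suc i) - g i) * S i n) =
      (\<Sum>j\<le>n. of_real (g j * c j) * X j) - of_real (g 0) * (\<Sum>j\<le>n. of_real (c j) * X j)"
    unfolding S_def by (rule Suc.IH)
  also have "\<dots> + of_real (g (Suc n) - g 0) * cX =
      (\<Sum>j\<le>Suc n. of_real (g j * c j) * X j) - of_real (g 0) * (\<Sum>j\<le>Suc n. of_real (c j) * X j)"
    by (simp add: cX_def algebra_simps)
  finally show ?case unfolding S_def .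
qed simp

lemma funpow_cderiv_zero: "(cderiv ^^ j) (\<lambda>_. 0) = (\<lambda>_. 0)"
  using funpow_cderiv_exp_fun[of j 0] by simp

lemma lincomb_eq_zero_imp_coeffs_zero:
  assumes "a < b" "\<forall>k\<le>n. smooth_fun (p k) \<and> zero_order_exactly (p k) a k"
    and "\<forall>x\<in>{a..b}. (\<Sum>k\<le>n. w k * p k x) = 0"
  shows "\<forall>k\<le>n. w k = 0"
proof -
  have sm: "\<forall>k\<in>{..n}. smooth_fun (p k)" using assms(2) by simp
  have jets: "(\<Sum>j\<le>n. w j * (cderiv ^^ k) (p j) a) = 0" for k
    using funpow_cderiv_eq_on_interval[OF assms(1) smooth_fun_lincomb[OF _ sm] smooth_fun_zero] assms(1,3)
    by (simp add: funpow_cderiv_lincomb[OF _ sm] funpow_cderiv_zero)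
  show ?thesis
  proof (intro allI impI)
    fix k assume "k \<le> n"
    then show "w k = 0"
    proof (induction k rule: less_induct)
      case (less k)
      have "w j * (cderiv ^^ k) (p j) a = 0" if "j \<in> {..n} - {k}" for j
      proof (cases "j < k")
        case True
        then show ?thesis using less.IH that by simp
      next
        case False
        with that have "k < j" by simp
        then show ?thesis using assms(2) that by (simp add: zero_order_exactly_def zero_at_least_def)
      qed
      then have "(\<Sum>j\<in>{..n} - {k}. w j * (cderiv ^^ k) (p j) a) = 0" by (simp add: sum.neutral)
      then have "(\<Sum>j\<le>n. w j * (cderiv ^^ k) (p j) a) = w k * (cderiv ^^ k) (p k) a"
        using sum.remove[of "{..n}" k "\<lambda>j. w j * (cderiv ^^ k) (p j) a"] less.prems by simp
      then show ?case using jets[of k] assms(2) less.prems by (simp add: zero_order_exactly_def)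
    qed
  qed
qed

lemma lincomb_coeffs_unique:
  fixes u v :: "nat \<Rightarrow> real"
  assumes "a < b" "\<forall>k\<le>n. smooth_fun (p k) \<and> zero_order_exactly (p k) a k"
    and "\<forall>x\<in>{a..b}. (\<Sum>k\<le>n. of_real (u k) * p k x) = F x"
    and "\<forall>x\<in>{a..b}. (\<Sum>k\<le>n. of_real (v k) * p k x) = F x"
  shows "\<forall>k\<le>n. u k = v k"
proof -
  have "\<forall>x\<in>{a..b}. (\<Sum>k\<le>n. of_real (u k - v k) * p k x) = 0"
    using assms(3,4) by (simp add: algebra_simps sum_subtractf)
  from lincomb_eq_zero_imp_coeffs_zero[OF assms(1,2) this] show ?thesis by simp
qed

lemma bern_op_exp_eq_iff:
  fixes l :: real and c :: "nat \<Rightarrow> real"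
  assumes "a < b" "\<forall>k\<le>n. smooth_fun (p k) \<and> zero_order_exactly (p k) a k"
    and c: "\<forall>x\<in>{a..b}. (\<Sum>k\<le>n. of_real (c k) * p k x) = of_real (exp (l * x))"
  shows "(\<forall>x\<in>{a..b}. bern_op n t \<alpha> p (\<lambda>y. exp (l * y)) x = of_real (exp (l * x))) \<longleftrightarrow>
    (\<forall>k\<le>n. exp (l * t k) * \<alpha> k = c k)"
proof
  assume "\<forall>x\<in>{a..b}. bern_op n t \<alpha> p (\<lambda>y. exp (l * y)) x = of_real (exp (l * x))"
  then have "\<forall>x\<in>{a..b}. (\<Sum>k\<le>n. of_real (exp (l * t k) * \<alpha> k) * p k x) = of_real (exp (l * x))"
    by (simp add: bern_op_def mult.commute)
  then show "\<forall>k\<le>n. exp (l * t k) * \<alpha> k = c k"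
    by (rule lincomb_coeffs_unique[OF assms(1,2) _ c])
next
  assume "\<forall>k\<le>n. exp (l * t k) * \<alpha> k = c k"
  then show "\<forall>x\<in>{a..b}. bern_op n t \<alpha> p (\<lambda>y. exp (l * y)) x = of_real (exp (l * x))"
    using c by (simp add: bern_op_def)
qed

lemma exp_node_weight_unique:
  fixes l0 l1 t \<alpha> c d :: real
  assumes "l0 \<noteq> l1" "\<alpha> > 0" "exp (l0 * t) * \<alpha> = c" "exp (l1 * t) * \<alpha> = d"
  shows "t = ln (d / c) / (l1 - l0)" "\<alpha> = c / exp (l0 * t)"
proof -
  have "d / c = exp ((l1 - l0) * t)"
    using assms(2-4) by (auto simp: field_simps exp_diff[symmetric] left_diff_distrib)
  then show "t = ln (d / c) / (l1 - l0)" using assms(1) by simp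
  show "\<alpha> = c / exp (l0 * t)" using assms(3) by (simp add: field_simps)
qed

lemma exp_node_weight_exists:
  fixes l0 l1 c d :: real
  assumes "l0 < l1" "c > 0" "exp ((l1 - l0) * a) \<le> d / c" "d / c \<le> exp ((l1 - l0) * b)"
  defines "t \<equiv> ln (d / c) / (l1 - l0)"
  shows "t \<in> {a..b}" "c / exp (l0 * t) > 0"
    "exp (l0 * t) * (c / exp (l0 * t)) = c" "exp (l1 * t) * (c / exp (l0 * t)) = d"
proof -
  have "d / c > 0" using assms(3) exp_gt_zero[of "(l1 - l0) * a"] by linarith
  then have dc: "exp ((l1 - l0) * t) = d / c" using assms(1) by (simp add: t_def)
  show "t \<in> {a..b}"
    using assms(1,3,4) unfolding dc[symmetric] by simp
  show "c / exp (l0 * t) > 0" "exp (l0 * t) * (c / exp (l0 * t)) = c" using assms(2) by simp_all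
  have "exp (l1 * t) / exp (l0 * t) = d / c" using dc by (simp add: left_diff_distrib exp_diff)
  then show "exp (l1 * t) * (c / exp (l0 * t)) = d" using assms(2) by (simp add: field_simps)
qed

lemma exp_coeff_ratio_at_ends:
  fixes l0 l1 :: real and c d :: "nat \<Rightarrow> real"
  assumes "a < b" "positive_bernstein_system p n a b"
    and c: "\<forall>x\<in>{a..b}. (\<Sum>k\<le>n. of_real (c k) * p k x) = of_real (exp (l0 * x))"
    and d: "\<forall>x\<in>{a..b}. (\<Sum>k\<le>n. of_real (d k) * p k x) = of_real (exp (l1 * x))"
  shows "d 0 / c 0 = exp ((l1 - l0) * a)" "d n / c n = exp ((l1 - l0) * b)"
proof -
  have za: "\<forall>k\<le>n. zero_at_least (p k) a k" and zb: "\<forall>k\<le>n. zero_at_least (p k) b (n - k)"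
    and "Re (p 0 a) > 0" "Re (p n b) > 0"
    using assms(2) unfolding positive_bernstein_system_def by (metis diff_self_eq_0 funpow_0 le0
        le_refl mult_1 power_0)+
  moreover have eqs: "of_real (c 0) * p 0 a = of_real (exp (l0 * a))" "of_real (d 0) * p 0 a = of_real (exp (l1 * a))"
    "of_real (c n) * p n b = of_real (exp (l0 * b))" "of_real (d n) * p n b = of_real (exp (l1 * b))"
    using c[rule_format, of a] d[rule_format, of a] c[rule_format, of b] d[rule_format, of b] assms(1)
    by (simp_all add: lincomb_at_left_end[OF za] lincomb_at_right_end[OF zb])
  have Re_eqs: "c 0 * Re (p 0 a) = exp (l0 * a)" "d 0 * Re (p 0 a) = exp (l1 * a)"
    "c n * Re (p n b) = exp (l0 * b)" "d n * Re (p n b) = exp (l1 * b)"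
    using arg_cong[OF eqs(1), of Re] arg_cong[OF eqs(2), of Re]
      arg_cong[OF eqs(3), of Re] arg_cong[OF eqs(4), of Re] by simp_all
  have "d 0 / c 0 = (d 0 * Re (p 0 a)) / (c 0 * Re (p 0 a))"
    "d n / c n = (d n * Re (p n b)) / (c n * Re (p n b))"
    using \<open>Re (p 0 a) > 0\<close> \<open>Re (p n b) > 0\<close> by simp_all
  then show "d 0 / c 0 = exp ((l1 - l0) * a)" "d n / c n = exp ((l1 - l0) * b)"
    unfolding Re_eqs by (simp_all add: left_diff_distrib exp_diff)
qed

text \<open>Summation by parts; the multiple of the expansion of \<open>exp (l0 * x)\<close> that it produces is
  annihilated by \<open>d/dx - l0\<close>.\<close>

lemma exp_expansion_in_derived_tails:
  fixes l0 l1 :: real and c d :: "nat \<Rightarrow> real"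
  assumes ab: "a < b" and sm: "\<forall>k\<le>n. smooth_fun (p k)" and "\<forall>k\<le>n. c k \<noteq> 0"
    and c: "\<forall>x\<in>{a..b}. (\<Sum>k\<le>n. of_real (c k) * p k x) = of_real (exp (l0 * x))"
    and d: "\<forall>x\<in>{a..b}. (\<Sum>k\<le>n. of_real (d k) * p k x) = of_real (exp (l1 * x))"
  shows "\<forall>x\<in>{a..b}. (\<Sum>i<n. of_real (d (Suc i) / c (Suc i) - d i / c i) *
      (\<Sum>j\<in>{i<..n}. of_real (c j) * diff_op (of_real l0) (p j) x)) = of_real ((l1 - l0) * exp (l1 * x))"
proof
  fix x assume "x \<in> {a..b}"
  define g where "g k = d k / c k" for k
  have "(\<Sum>j\<le>n. of_real (g j * c j) * diff_op (of_real l0) (p j) x) =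
      (\<Sum>j\<le>n. of_real (d j) * diff_op (of_real l0) (p j) x)"
    using assms(3) by (simp add: g_def)
  then show "(\<Sum>i<n. of_real (d (Suc i) / c (Suc i) - d i / c i) *
      (\<Sum>j\<in>{i<..n}. of_real (c j) * diff_op (of_real l0) (p j) x)) = of_real ((l1 - l0) * exp (l1 * x))"
    using sum_tails_telescope[of g c "\<lambda>j. diff_op (of_real l0) (p j) x" n] \<open>x \<in> {a..b}\<close>
      diff_op_exp_expansion[OF ab sm, of c 1 l0 l0] diff_op_exp_expansion[OF ab sm, of d 1 l1 l0] c d
    by (simp add: g_def)
qed

lemma exp_coeff_ratios_increasing:
  fixes l0 l1 :: real and c d :: "nat \<Rightarrow> real"
  assumes ab: "a < b" and "l0 < l1" and n: "2 \<le> n" and P: "positive_bernstein_system p n a b"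
    and pV: "\<forall>k\<le>n. p k \<in> exp_poly_space (of_real l0 # of_real l1 # mus)"
    and cheb: "ext_chebyshev (exp_poly_space mus) (n - 2) a b"
    and c: "\<forall>x\<in>{a..b}. (\<Sum>k\<le>n. of_real (c k) * p k x) = of_real (exp (l0 * x))"
    and d: "\<forall>x\<in>{a..b}. (\<Sum>k\<le>n. of_real (d k) * p k x) = of_real (exp (l1 * x))"
  shows "\<forall>k\<le>n. c k > 0" "\<forall>k<n. d k / c k < d (Suc k) / c (Suc k)"
proof -
  define D where "D j = diff_op (of_real l0) (p j)" for j
  define M where "M i = (\<lambda>x. \<Sum>j\<in>{i<..n}. of_real (c j) * D j x)" for i
  define g where "g k = d k / c k" for k
  have sm: "\<forall>k\<le>n. smooth_fun (p k)" using P by (simp add: positive_bernstein_system_def)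
  have DV: "\<forall>j\<le>n. D j \<in> exp_poly_space (of_real l1 # mus)"
    using pV by (simp add: D_def diff_op_in_exp_poly_space)
  have "n - 1 = Suc (n - 2)" using n by simp
  then have "ext_chebyshev_at_ends (exp_poly_space (of_real l1 # mus)) (n - 1) a b"
    using ext_chebyshev_at_ends_Cons[OF ab cheb, of l1] by simp
  note tails = positive_bernstein_system_tails[OF ab _ P DV[unfolded D_def] this, of c 1]
  have cpos: "\<forall>k\<le>n. c k > 0" using tails(1) c n by simp
  have "M = (\<lambda>i x. \<Sum>j\<in>{i<..n}. of_real (c j) * diff_op (of_real l0) (p j) x)"
    by (simp add: M_def D_def fun_eq_iff)
  then have M: "positive_bernstein_system M (n - 1) a b" using tails(2) c n by simp
  have MV: "\<forall>i\<le>n - 1. diff_op (of_real l1) (M i) \<in> exp_poly_space mus"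
    using DV unfolding M_def by (auto intro!: diff_op_in_exp_poly_space exp_poly_space_lincomb)
  have cheb2: "ext_chebyshev_at_ends (exp_poly_space mus) (n - 1 - 1) a b"
    using ext_chebyshev_imp_at_ends[OF cheb ab] by (simp add: diff_diff_left numeral_2_eq_2)
  have "{..n - 1} = {..<n}" using n by auto
  then have expansion: "\<forall>x\<in>{a..b}. (\<Sum>i\<le>n - 1. of_real (g (Suc i) - g i) * M i x) =
      of_real ((l1 - l0) * exp (l1 * x))"
    using exp_expansion_in_derived_tails[OF ab sm _ c d] cpos
    by (simp add: M_def D_def g_def less_imp_neq[symmetric])
  have "\<forall>i\<le>n - 1. g (Suc i) - g i > 0"
    by (rule positive_bernstein_system_tails(1)[OF ab _ M MV cheb2 expansion])
      (use n \<open>l0 < l1\<close> in auto)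
  then show "\<forall>k<n. d k / c k < d (Suc k) / c (Suc k)" using g_def by force
  show "\<forall>k\<le>n. c k > 0" by (rule cpos)
qed

lemma exp_coeff_ratios_bounds:
  fixes l0 l1 :: real and c d :: "nat \<Rightarrow> real"
  assumes "a < b" "l0 < l1" "2 \<le> n" "positive_bernstein_system p n a b"
    and "\<forall>k\<le>n. p k \<in> exp_poly_space (of_real l0 # of_real l1 # mus)"
    and "ext_chebyshev (exp_poly_space mus) (n - 2) a b"
    and c: "\<forall>x\<in>{a..b}. (\<Sum>k\<le>n. of_real (c k) * p k x) = of_real (exp (l0 * x))"
    and d: "\<forall>x\<in>{a..b}. (\<Sum>k\<le>n. of_real (d k) * p k x) = of_real (exp (l1 * x))"
  shows "\<forall>k\<le>n. c k > 0 \<and> exp ((l1 - l0) * a) \<le> d k / c k \<and> d k / c k \<le> exp ((l1 - l0) * b)"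
proof (intro allI impI conjI)
  fix k assume "k \<le> n"
  note ratios = exp_coeff_ratios_increasing[OF assms] exp_coeff_ratio_at_ends[OF assms(1,4) c d]
  show "c k > 0" using ratios(1) \<open>k \<le> n\<close> by simp
  have mono: "d i / c i \<le> d (Suc i) / c (Suc i)" if "i \<in> {..<n}" for i
    using ratios(2) that by (simp add: less_imp_le)
  have "{0..<k} \<subseteq> {..<n}" "{k..<n} \<subseteq> {..<n}" using \<open>k \<le> n\<close> by auto
  then have "d 0 / c 0 \<le> d k / c k" "d k / c k \<le> d n / c n"
    using lift_Suc_mono_le_ivl[of "{..<n}" "\<lambda>k. d k / c k", OF mono] \<open>k \<le> n\<close> by simp_all
  then show "exp ((l1 - l0) * a) \<le> d k / c k" "d k / c k \<le> exp ((l1 - l0) * b)"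
    using ratios(3,4) by simp_all
qed

lemma bern_op_nodes_exist_unique:
  fixes l0 l1 :: real and c d :: "nat \<Rightarrow> real"
  assumes "a < b" "l0 < l1" and p: "\<forall>k\<le>n. smooth_fun (p k) \<and> zero_order_exactly (p k) a k"
    and c: "\<forall>x\<in>{a..b}. (\<Sum>k\<le>n. of_real (c k) * p k x) = of_real (exp (l0 * x))"
    and d: "\<forall>x\<in>{a..b}. (\<Sum>k\<le>n. of_real (d k) * p k x) = of_real (exp (l1 * x))"
    and bounds: "\<forall>k\<le>n. c k > 0 \<and> exp ((l1 - l0) * a) \<le> d k / c k \<and> d k / c k \<le> exp ((l1 - l0) * b)"
  shows "\<exists>t \<alpha>. (\<forall>k\<le>n. t k \<in> {a..b} \<and> \<alpha> k > 0)
           \<and> (\<forall>x\<in>{a..b}. bern_op n t \<alpha> p (\<lambda>y. exp (l0 * y)) x = of_real (exp (l0 * x)))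
           \<and> (\<forall>x\<in>{a..b}. bern_op n t \<alpha> p (\<lambda>y. exp (l1 * y)) x = of_real (exp (l1 * x)))
           \<and> (\<forall>t' \<alpha>'. (\<forall>k\<le>n. t' k \<in> {a..b} \<and> \<alpha>' k > 0)
                 \<and> (\<forall>x\<in>{a..b}. bern_op n t' \<alpha>' p (\<lambda>y. exp (l0 * y)) x = of_real (exp (l0 * x)))
                 \<and> (\<forall>x\<in>{a..b}. bern_op n t' \<alpha>' p (\<lambda>y. exp (l1 * y)) x = of_real (exp (l1 * x)))
                 \<longrightarrow> (\<forall>k\<le>n. t' k = t k \<and> \<alpha>' k = \<alpha> k))"
proof -
  define t where "t k = ln (d k / c k) / (l1 - l0)" for k
  define \<alpha> where "\<alpha> k = c k / exp (l0 * t k)" for k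
  have node_weight: "t k \<in> {a..b} \<and> \<alpha> k > 0 \<and> exp (l0 * t k) * \<alpha> k = c k \<and> exp (l1 * t k) * \<alpha> k = d k"
    if "k \<le> n" for k
    using exp_node_weight_exists[OF assms(2)] bounds that unfolding t_def \<alpha>_def by blast
  have unique: "t' k = t k \<and> \<alpha>' k = \<alpha> k"
    if "\<alpha>' k > 0" "exp (l0 * t' k) * \<alpha>' k = c k" "exp (l1 * t' k) * \<alpha>' k = d k" for t' \<alpha>' k
    using exp_node_weight_unique[OF _ that] assms(2) by (simp add: t_def \<alpha>_def)
  note reproduces = bern_op_exp_eq_iff[OF assms(1) p c] bern_op_exp_eq_iff[OF assms(1) p d]
  have "\<forall>k\<le>n. t' k = t k \<and> \<alpha>' k = \<alpha> k"
    if "\<forall>k\<le>n. t' k \<in> {a..b} \<and> \<alpha>' k > 0"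
      and "\<forall>x\<in>{a..b}. bern_op n t' \<alpha>' p (\<lambda>y. exp (l0 * y)) x = of_real (exp (l0 * x))"
      and "\<forall>x\<in>{a..b}. bern_op n t' \<alpha>' p (\<lambda>y. exp (l1 * y)) x = of_real (exp (l1 * x))" for t' \<alpha>'
    using that reproduces[where t = t' and \<alpha> = \<alpha>'] unique[of \<alpha>' _ t'] by simp
  moreover have "\<forall>x\<in>{a..b}. bern_op n t \<alpha> p (\<lambda>y. exp (l0 * y)) x = of_real (exp (l0 * x))"
    "\<forall>x\<in>{a..b}. bern_op n t \<alpha> p (\<lambda>y. exp (l1 * y)) x = of_real (exp (l1 * x))"
    using reproduces[where t = t and \<alpha> = \<alpha>] node_weight by simp_all
  ultimately show ?thesis using node_weight by blast
qed

theorem theorem9: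
  fixes n :: nat and a b l0 l1 :: real and lam :: "nat \<Rightarrow> complex"
    and p :: "nat \<Rightarrow> real \<Rightarrow> complex"
  assumes "n \<ge> 2" and "a < b" and "l0 < l1"
    and "lam 0 = of_real l0" and "lam 1 = of_real l1"
    and "ext_chebyshev (exp_poly_space (map lam [2..<n+1])) (n - 2) a b"
    and "closed_under_cnj (exp_poly_space (map lam [2..<n+1]))"
    and "bernstein_basis p n (exp_poly_space (map lam [0..<n+1])) a b"
    and "\<forall>k\<le>n. \<forall>x\<in>{a..b}. p k x \<in> \<real> \<and> Re (p k x) \<ge> 0"
  shows "\<exists>t \<alpha>. (\<forall>k\<le>n. t k \<in> {a..b} \<and> \<alpha> k > 0)
           \<and> (\<forall>x\<in>{a..b}. bern_op n t \<alpha> p (\<lambda>y. exp (l0 * y)) x = of_real (exp (l0 * x)))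
           \<and> (\<forall>x\<in>{a..b}. bern_op n t \<alpha> p (\<lambda>y. exp (l1 * y)) x = of_real (exp (l1 * x)))
           \<and> (\<forall>t' \<alpha>'. (\<forall>k\<le>n. t' k \<in> {a..b} \<and> \<alpha>' k > 0)
                 \<and> (\<forall>x\<in>{a..b}. bern_op n t' \<alpha>' p (\<lambda>y. exp (l0 * y)) x = of_real (exp (l0 * x)))
                 \<and> (\<forall>x\<in>{a..b}. bern_op n t' \<alpha>' p (\<lambda>y. exp (l1 * y)) x = of_real (exp (l1 * x)))
                 \<longrightarrow> (\<forall>k\<le>n. t' k = t k \<and> \<alpha>' k = \<alpha> k))"
proof -
  define mus where "mus = map lam [2..<n+1]"
  have "[0..<n+1] = 0 # 1 # [2..<n+1]"
    using assms(1) by (simp add: upt_conv_Cons numeral_3_eq_3 del: upt_Suc)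
  then have lams: "map lam [0..<n+1] = of_real l0 # of_real l1 # mus"
    using assms(4,5) by (simp add: mus_def)
  have len: "length (of_real l0 # of_real l1 # mus) = Suc n" using assms(1) by (simp add: mus_def)
  note basis = assms(8)[unfolded lams]
  have P: "positive_bernstein_system p n a b"
    by (rule bernstein_basis_imp_positive_system[OF assms(2) basis assms(9)])
  have pV: "\<forall>k\<le>n. p k \<in> exp_poly_space (of_real l0 # of_real l1 # mus) \<and> zero_order_exactly (p k) a k"
    using basis by (simp add: bernstein_basis_def)
  have real: "\<forall>k\<le>n. \<forall>x\<in>{a..b}. p k x \<in> \<real>" using assms(9) by blast
  obtain c where c: "\<forall>x\<in>{a..b}. (\<Sum>k\<le>n. of_real (c k) * p k x) = of_real (exp (l0 * x))"
    using exp_eq_real_lincomb[OF list.set_intros(1) len pV real] by blast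
  obtain d where d: "\<forall>x\<in>{a..b}. (\<Sum>k\<le>n. of_real (d k) * p k x) = of_real (exp (l1 * x))"
    using exp_eq_real_lincomb[OF list.set_intros(2)[OF list.set_intros(1)] len pV real] by blast
  have "\<forall>k\<le>n. c k > 0 \<and> exp ((l1 - l0) * a) \<le> d k / c k \<and> d k / c k \<le> exp ((l1 - l0) * b)"
    using pV by (intro exp_coeff_ratios_bounds[OF assms(2,3,1) P _ assms(6)[folded mus_def] c d]) blast
  moreover have "\<forall>k\<le>n. smooth_fun (p k) \<and> zero_order_exactly (p k) a k"
    using pV by (simp add: exp_poly_space_def)
  ultimately show ?thesis using bern_op_nodes_exist_unique[OF assms(2,3) _ c d] by blast
qed

end
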